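(* Let $A\overset{i}{\to}U\overset{j}{\to}G$ be an extension of a semilattice of groups $A$ by a group $G$. Then there exist an inverse semigroup $S$ and epimorphisms $\pi:U\to S$, $\kappa:S\to G$ such that (i) $A\overset{i}{\to}U\overset{\pi}{\to}S$ is an extension of $A$ by $S$, and (ii) $j=\kappa\circ\pi$. Moreover, whenever $S,\pi,\kappa$ satisfy (i) and (ii), then (iii) $S$ is $E$-unitary and (iv) $\ker\kappa=\sigma$ (the minimum group congruence on $S$).
   Context: A semilattice of groups is an inverse semigroup whose idempotents are central. An extension of $A$ by a group $G$ is an inverse semigroup $U$ with a monomorphism $i:A\to U$ and an epimorphism $j:U\to G$ with $i(A)=j^{-1}(1)$. An extension of $A$ by an inverse semigroup $S$ is an inverse semigroup $U$ with a monomorphism $i:A\to U$ and an idempotent-separating epimorphism $\pi:U\to S$ with $i(A)=\pi^{-1}(E(S))$. For an inverse semigroup $S$, $\sigma$ is given by $(s,t)\in\sigma$ iff $es=et$ for some $e\in E(S)$; $S$ is $E$-unitary if $e\le s$ with $e\in E(S)$ implies $s\in E(S)$; $\ker\kappa=\{(s,t):\kappa(s)=\kappa(t)\}$. *)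

theory Defs
  imports "HOL-Algebra.Group"
begin

text \<open>Inverse semigroups are represented by HOL-Algebra monoid records whose
  unit field is ignored; only carrier and multiplication are used.\<close>

definition semigroup_on :: "('a, 'b) monoid_scheme \<Rightarrow> bool" where
  "semigroup_on S \<longleftrightarrow>
     (\<forall>x\<in>carrier S. \<forall>y\<in>carrier S. x \<otimes>\<^bsub>S\<^esub> y \<in> carrier S) \<and>
     (\<forall>x\<in>carrier S. \<forall>y\<in>carrier S. \<forall>z\<in>carrier S.
        x \<otimes>\<^bsub>S\<^esub> y \<otimes>\<^bsub>S\<^esub> z = x \<otimes>\<^bsub>S\<^esub> (y \<otimes>\<^bsub>S\<^esub> z))"

definition inverse_semigroup :: "('a, 'b) monoid_scheme \<Rightarrow> bool" where
  "inverse_semigroup S \<longleftrightarrow> semigroup_on S \<and>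
     (\<forall>a\<in>carrier S. \<exists>!b. b \<in> carrier S \<and>
        a \<otimes>\<^bsub>S\<^esub> b \<otimes>\<^bsub>S\<^esub> a = a \<and> b \<otimes>\<^bsub>S\<^esub> a \<otimes>\<^bsub>S\<^esub> b = b)"

definition idems :: "('a, 'b) monoid_scheme \<Rightarrow> 'a set" where
  "idems S = {e \<in> carrier S. e \<otimes>\<^bsub>S\<^esub> e = e}"

definition semilattice_of_groups :: "('a, 'b) monoid_scheme \<Rightarrow> bool" where
  "semilattice_of_groups A \<longleftrightarrow> inverse_semigroup A \<and>
     (\<forall>e\<in>idems A. \<forall>x\<in>carrier A. e \<otimes>\<^bsub>A\<^esub> x = x \<otimes>\<^bsub>A\<^esub> e)"

definition group_extension ::
  "('a, 'm) monoid_scheme \<Rightarrow> ('u, 'n) monoid_scheme \<Rightarrow> ('g, 'k) monoid_scheme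
   \<Rightarrow> ('a \<Rightarrow> 'u) \<Rightarrow> ('u \<Rightarrow> 'g) \<Rightarrow> bool" where
  "group_extension A U G i j \<longleftrightarrow> inverse_semigroup A \<and> inverse_semigroup U \<and> group G \<and>
     i \<in> mon A U \<and> j \<in> epi U G \<and>
     i ` carrier A = {u \<in> carrier U. j u = \<one>\<^bsub>G\<^esub>}"

definition idempotent_separating ::
  "('u, 'n) monoid_scheme \<Rightarrow> ('u \<Rightarrow> 's) \<Rightarrow> bool" where
  "idempotent_separating U p \<longleftrightarrow>
     (\<forall>e\<in>idems U. \<forall>f\<in>idems U. p e = p f \<longrightarrow> e = f)"

definition is_extension ::
  "('a, 'm) monoid_scheme \<Rightarrow> ('u, 'n) monoid_scheme \<Rightarrow> ('s, 'k) monoid_scheme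
   \<Rightarrow> ('a \<Rightarrow> 'u) \<Rightarrow> ('u \<Rightarrow> 's) \<Rightarrow> bool" where
  "is_extension A U S i p \<longleftrightarrow> inverse_semigroup A \<and> inverse_semigroup U \<and> inverse_semigroup S \<and>
     i \<in> mon A U \<and> p \<in> epi U S \<and> idempotent_separating U p \<and>
     i ` carrier A = {u \<in> carrier U. p u \<in> idems S}"

definition nat_le :: "('a, 'b) monoid_scheme \<Rightarrow> 'a \<Rightarrow> 'a \<Rightarrow> bool" where
  "nat_le S s t \<longleftrightarrow> s \<in> carrier S \<and> t \<in> carrier S \<and>
     (\<exists>e\<in>idems S. s = e \<otimes>\<^bsub>S\<^esub> t)"

definition E_unitary :: "('a, 'b) monoid_scheme \<Rightarrow> bool" where
  "E_unitary S \<longleftrightarrow> (\<forall>e\<in>idems S. \<forall>s\<in>carrier S. nat_le S e s \<longrightarrow> s \<in> idems S)"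

definition sigma_rel :: "('a, 'b) monoid_scheme \<Rightarrow> ('a \<times> 'a) set" where
  "sigma_rel S = {(s, t). s \<in> carrier S \<and> t \<in> carrier S \<and>
     (\<exists>e\<in>idems S. e \<otimes>\<^bsub>S\<^esub> s = e \<otimes>\<^bsub>S\<^esub> t)}"

definition ker_rel :: "('s, 'b) monoid_scheme \<Rightarrow> ('s \<Rightarrow> 'g) \<Rightarrow> ('s \<times> 's) set" where
  "ker_rel S k = {(s, t). s \<in> carrier S \<and> t \<in> carrier S \<and> k s = k t}"

end

theory Submission
  imports Defs
begin

text \<open>The semigroup S is U/\<rho> for \<rho> = ker j \<inter> \<R>, where u \<R> v iff u u\<inverse> = v v\<inverse>.
  Green's relation \<R> is a left congruence, and it becomes right compatible on ker j because
  the idempotents of U lie in i(A) = ker j and so commute with ker j, A being a semilattice of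
  groups. Every \<R>-class contains exactly one idempotent, so U \<rightarrow> U/\<rho> separates idempotents,
  and a class is idempotent exactly when it lies in ker j; hence j factors as \<kappa> \<circ> \<pi>.
  Conversely, for any such factorization E(S) = \<kappa>\<inverse>(1), and a homomorphism of an inverse
  semigroup onto a group with kernel E(S) forces E-unitarity and ker \<kappa> = \<sigma>: if \<kappa> s = \<kappa> t
  then e = s t\<inverse> is idempotent and e s = e t.\<close>

locale inv_semigroup =
  fixes S (structure)
  assumes inverse_semigroup: "inverse_semigroup S"
begin

lemma m_closed [intro, simp]: "x \<in> carrier S \<Longrightarrow> y \<in> carrier S \<Longrightarrow> x \<otimes> y \<in> carrier S"
  using inverse_semigroup unfolding inverse_semigroup_def semigroup_on_def by blast

lemma m_assoc:
  "x \<in> carrier S \<Longrightarrow> y \<in> carrier S \<Longrightarrow> z \<in> carrier S \<Longrightarrow> x \<otimes> y \<otimes> z = x \<otimes> (y \<otimes> z)"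
  using inverse_semigroup unfolding inverse_semigroup_def semigroup_on_def by blast

lemma unique_inverse:
  "a \<in> carrier S \<Longrightarrow> \<exists>!b. b \<in> carrier S \<and> a \<otimes> b \<otimes> a = a \<and> b \<otimes> a \<otimes> b = b"
  using inverse_semigroup unfolding inverse_semigroup_def by blast

definition sinv :: "'a \<Rightarrow> 'a" where
  "sinv a = (THE b. b \<in> carrier S \<and> a \<otimes> b \<otimes> a = a \<and> b \<otimes> a \<otimes> b = b)"

lemma sinv_closed [intro, simp]: "a \<in> carrier S \<Longrightarrow> sinv a \<in> carrier S"
  and sinv_regular: "a \<in> carrier S \<Longrightarrow> a \<otimes> sinv a \<otimes> a = a"
  and sinv_regular': "a \<in> carrier S \<Longrightarrow> sinv a \<otimes> a \<otimes> sinv a = sinv a"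
  using theI'[OF unique_inverse] unfolding sinv_def by blast+

lemma sinv_cancel [simp]:
  "a \<in> carrier S \<Longrightarrow> a \<otimes> (sinv a \<otimes> a) = a"
  "a \<in> carrier S \<Longrightarrow> sinv a \<otimes> (a \<otimes> sinv a) = sinv a"
  "a \<in> carrier S \<Longrightarrow> x \<in> carrier S \<Longrightarrow> a \<otimes> (sinv a \<otimes> (a \<otimes> x)) = a \<otimes> x"
  "a \<in> carrier S \<Longrightarrow> x \<in> carrier S \<Longrightarrow> sinv a \<otimes> (a \<otimes> (sinv a \<otimes> x)) = sinv a \<otimes> x"
  using sinv_regular sinv_regular' by (simp_all add: m_assoc flip: m_assoc)

lemma sinv_unique:
  assumes "a \<in> carrier S" "b \<in> carrier S" "a \<otimes> b \<otimes> a = a" "b \<otimes> a \<otimes> b = b"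
  shows "sinv a = b"
  using unique_inverse[OF assms(1)] assms sinv_closed sinv_regular sinv_regular' by blast

lemma sinv_sinv [simp]: "a \<in> carrier S \<Longrightarrow> sinv (sinv a) = a"
  by (rule sinv_unique) (auto simp: m_assoc)

lemma sinv_idem: "e \<in> idems S \<Longrightarrow> sinv e = e"
  by (rule sinv_unique) (auto simp: idems_def)

lemma mult_sinv_idem: "a \<in> carrier S \<Longrightarrow> a \<otimes> sinv a \<in> idems S"
  by (auto simp: idems_def m_assoc)

lemma sinv_mult_idem: "a \<in> carrier S \<Longrightarrow> sinv a \<otimes> a \<in> idems S"
  by (auto simp: idems_def m_assoc)

text \<open>The inverse z of xy is y z x; hence z is idempotent and so is xy = sinv z = z.\<close>
lemma idems_mult_closed:
  assumes x: "x \<in> idems S" and y: "y \<in> idems S"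
  shows "x \<otimes> y \<in> idems S"
proof -
  have xc: "x \<in> carrier S" and xx: "\<And>r. r \<in> carrier S \<Longrightarrow> x \<otimes> (x \<otimes> r) = x \<otimes> r"
    using x by (auto simp: idems_def m_assoc[symmetric])
  have yc: "y \<in> carrier S" and yy: "\<And>r. r \<in> carrier S \<Longrightarrow> y \<otimes> (y \<otimes> r) = y \<otimes> r"
    using y by (auto simp: idems_def m_assoc[symmetric])
  define z where "z = sinv (x \<otimes> y)"
  have zc: "z \<in> carrier S" using xc yc by (simp add: z_def)
  have z1: "x \<otimes> (y \<otimes> (z \<otimes> (x \<otimes> y))) = x \<otimes> y" and z2: "z \<otimes> (x \<otimes> (y \<otimes> z)) = z"
    using sinv_regular[of "x \<otimes> y"] sinv_regular'[of "x \<otimes> y"] xc yc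
    by (simp_all add: z_def m_assoc)
  have z2': "z \<otimes> (x \<otimes> (y \<otimes> (z \<otimes> r))) = z \<otimes> r" if "r \<in> carrier S" for r
  proof -
    have "z \<otimes> (x \<otimes> (y \<otimes> (z \<otimes> r))) = z \<otimes> (x \<otimes> (y \<otimes> z)) \<otimes> r"
      using xc yc zc that by (simp add: m_assoc)
    then show ?thesis by (simp only: z2)
  qed
  have "sinv (x \<otimes> y) = y \<otimes> z \<otimes> x"
    by (rule sinv_unique) (use xc yc zc z1 z2' in \<open>simp_all add: m_assoc xx yy\<close>)
  then have zw: "z = y \<otimes> z \<otimes> x" by (simp add: z_def)
  have "z \<otimes> z = (y \<otimes> z \<otimes> x) \<otimes> (y \<otimes> z \<otimes> x)"
    using arg_cong2[OF zw zw, of "(\<otimes>)"] .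
  also have "\<dots> = y \<otimes> (z \<otimes> x)"
    using xc yc zc by (simp add: m_assoc z2')
  also have "\<dots> = z"
    using xc yc zc zw by (simp add: m_assoc)
  finally have zz: "z \<otimes> z = z" .
  then have "z \<in> idems S" using zc by (simp add: idems_def)
  moreover have "x \<otimes> y = sinv z" using xc yc by (simp add: z_def)
  ultimately show ?thesis by (simp add: sinv_idem)
qed

lemma idems_commute:
  assumes e: "e \<in> idems S" and f: "f \<in> idems S"
  shows "e \<otimes> f = f \<otimes> e"
proof -
  have ec: "e \<in> carrier S" and ee: "\<And>r. r \<in> carrier S \<Longrightarrow> e \<otimes> (e \<otimes> r) = e \<otimes> r"
    using e by (auto simp: idems_def m_assoc[symmetric])
  have fc: "f \<in> carrier S" and ff: "\<And>r. r \<in> carrier S \<Longrightarrow> f \<otimes> (f \<otimes> r) = f \<otimes> r"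
    using f by (auto simp: idems_def m_assoc[symmetric])
  have ef: "e \<otimes> (f \<otimes> (e \<otimes> f)) = e \<otimes> f" and fe: "f \<otimes> (e \<otimes> (f \<otimes> e)) = f \<otimes> e"
    using idems_mult_closed[OF e f] idems_mult_closed[OF f e] ec fc
    by (simp_all add: idems_def m_assoc)
  have "sinv (e \<otimes> f) = f \<otimes> e"
    by (rule sinv_unique) (use ec fc ef fe in \<open>simp_all add: m_assoc ee ff\<close>)
  then show ?thesis using sinv_idem[OF idems_mult_closed[OF e f]] by simp
qed

lemma sinv_mult:
  assumes a: "a \<in> carrier S" and b: "b \<in> carrier S"
  shows "sinv (a \<otimes> b) = sinv b \<otimes> sinv a"
proof (rule sinv_unique)
  have c: "b \<otimes> sinv b \<otimes> (sinv a \<otimes> a) = sinv a \<otimes> a \<otimes> (b \<otimes> sinv b)"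
    using idems_commute mult_sinv_idem sinv_mult_idem a b by blast
  have "a \<otimes> b \<otimes> (sinv b \<otimes> sinv a) \<otimes> (a \<otimes> b) = a \<otimes> (b \<otimes> sinv b \<otimes> (sinv a \<otimes> a)) \<otimes> b"
    using a b by (simp add: m_assoc)
  also have "\<dots> = a \<otimes> sinv a \<otimes> a \<otimes> (b \<otimes> sinv b \<otimes> b)"
    using a b by (simp add: c m_assoc)
  finally show "a \<otimes> b \<otimes> (sinv b \<otimes> sinv a) \<otimes> (a \<otimes> b) = a \<otimes> b"
    using a b by (simp add: sinv_regular)
  have "sinv b \<otimes> sinv a \<otimes> (a \<otimes> b) \<otimes> (sinv b \<otimes> sinv a)
      = sinv b \<otimes> (sinv a \<otimes> a \<otimes> (b \<otimes> sinv b)) \<otimes> sinv a"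
    using a b by (simp add: m_assoc)
  also have "\<dots> = sinv b \<otimes> b \<otimes> sinv b \<otimes> (sinv a \<otimes> a \<otimes> sinv a)"
    using a b by (simp add: c[symmetric] m_assoc)
  finally show "sinv b \<otimes> sinv a \<otimes> (a \<otimes> b) \<otimes> (sinv b \<otimes> sinv a) = sinv b \<otimes> sinv a"
    using a b by (simp add: sinv_regular')
qed (use a b in auto)

end

lemma inverse_semigroupI:
  fixes S (structure)
  assumes semigroup: "semigroup_on S"
    and regular: "\<And>a. a \<in> carrier S \<Longrightarrow> \<exists>b\<in>carrier S. a \<otimes> b \<otimes> a = a \<and> b \<otimes> a \<otimes> b = b"
    and commute: "\<And>e f. e \<in> idems S \<Longrightarrow> f \<in> idems S \<Longrightarrow> e \<otimes> f = f \<otimes> e"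
  shows "inverse_semigroup S"
proof -
  have cl: "\<And>x y. x \<in> carrier S \<Longrightarrow> y \<in> carrier S \<Longrightarrow> x \<otimes> y \<in> carrier S"
    and as: "\<And>x y z. x \<in> carrier S \<Longrightarrow> y \<in> carrier S \<Longrightarrow> z \<in> carrier S \<Longrightarrow>
                x \<otimes> y \<otimes> z = x \<otimes> (y \<otimes> z)"
    using semigroup unfolding semigroup_on_def by blast+
  have idem: "a \<otimes> b \<in> idems S" "b \<otimes> a \<in> idems S"
    if "a \<in> carrier S" "b \<in> carrier S" "a \<otimes> b \<otimes> a = a" for a b
    using that cl as by (auto simp: idems_def) (metis as cl)+
  have "b = c"
    if a: "a \<in> carrier S" and b: "b \<in> carrier S" and c: "c \<in> carrier S"
      and b1: "a \<otimes> b \<otimes> a = a" and b2: "b \<otimes> a \<otimes> b = b"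
      and c1: "a \<otimes> c \<otimes> a = a" and c2: "c \<otimes> a \<otimes> c = c" for a b c
  proof -
    have "b = b \<otimes> (a \<otimes> c \<otimes> a) \<otimes> b" using c1 b2 by simp
    also have "\<dots> = (b \<otimes> a) \<otimes> (c \<otimes> a) \<otimes> b" using a b c cl as by simp
    also have "\<dots> = (c \<otimes> a) \<otimes> (b \<otimes> a) \<otimes> b" using commute idem a b c b1 c1 by metis
    also have "\<dots> = c \<otimes> a \<otimes> b" using a b c cl as b2 by simp
    finally have cab: "b = c \<otimes> a \<otimes> b" .
    have "c = c \<otimes> (a \<otimes> b \<otimes> a) \<otimes> c" using b1 c2 by simp
    also have "\<dots> = c \<otimes> ((a \<otimes> b) \<otimes> (a \<otimes> c))" using a b c cl as by simp
    also have "\<dots> = c \<otimes> ((a \<otimes> c) \<otimes> (a \<otimes> b))" using commute idem a b c b1 c1 by metis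
    also have "\<dots> = (c \<otimes> a \<otimes> c) \<otimes> a \<otimes> b" using a b c cl as by simp
    also have "\<dots> = c \<otimes> a \<otimes> b" using c2 by simp
    finally show ?thesis using cab by simp
  qed
  then show ?thesis unfolding inverse_semigroup_def using semigroup regular by metis
qed

context inv_semigroup
begin

lemma hom_idem_eq_one:
  assumes "group G" "h \<in> hom S G" "e \<in> idems S"
  shows "h e = \<one>\<^bsub>G\<^esub>"
proof -
  interpret G: group G by fact
  have e: "e \<in> carrier S" "e \<otimes> e = e" using assms(3) by (auto simp: idems_def)
  then have "h e \<otimes>\<^bsub>G\<^esub> h e = h e" using hom_mult[OF assms(2) e(1) e(1)] by simp
  then show ?thesis using hom_in_carrier[OF assms(2) e(1)] by simp
qed

lemma hom_sinv:
  assumes "group G" "h \<in> hom S G" "a \<in> carrier S"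
  shows "h (sinv a) = inv\<^bsub>G\<^esub> h a"
proof -
  interpret G: group G by fact
  have "h (sinv a) \<otimes>\<^bsub>G\<^esub> h a = \<one>\<^bsub>G\<^esub>"
    using hom_idem_eq_one[OF assms(1,2) sinv_mult_idem[OF assms(3)]] hom_mult[OF assms(2)] assms(3)
    by simp
  then show ?thesis using assms(3) hom_in_carrier[OF assms(2)] by (simp add: G.inv_equality)
qed

lemma E_unitary_if_kernel_idems:
  assumes "group G" "h \<in> hom S G" and kernel: "{s \<in> carrier S. h s = \<one>\<^bsub>G\<^esub>} = idems S"
  shows "E_unitary S"
  unfolding E_unitary_def
proof (intro ballI impI)
  interpret G: group G by fact
  fix e s assume e: "e \<in> idems S" and s: "s \<in> carrier S" and "nat_le S e s"
  then obtain f where f: "f \<in> idems S" "e = f \<otimes> s" by (auto simp: nat_le_def)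
  have fc: "f \<in> carrier S" using f(1) by (simp add: idems_def)
  have "h s = h f \<otimes>\<^bsub>G\<^esub> h s"
    using hom_idem_eq_one[OF assms(1,2) f(1)] hom_in_carrier[OF assms(2) s] by simp
  also have "\<dots> = h e" using hom_mult[OF assms(2) fc s] f(2) by simp
  also have "\<dots> = \<one>\<^bsub>G\<^esub>" using hom_idem_eq_one[OF assms(1,2) e] .
  finally show "s \<in> idems S" using kernel s by blast
qed

lemma ker_rel_eq_sigma_rel_if_kernel_idems:
  assumes "group G" "h \<in> hom S G" and kernel: "{s \<in> carrier S. h s = \<one>\<^bsub>G\<^esub>} = idems S"
  shows "ker_rel S h = sigma_rel S"
proof (intro equalityI subsetI)
  interpret G: group G by fact
  fix p
  assume "p \<in> ker_rel S h"
  then obtain s t where p: "p = (s, t)" and s: "s \<in> carrier S" and t: "t \<in> carrier S"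
    and hst: "h s = h t" by (auto simp: ker_rel_def)
  define x where "x = s \<otimes> sinv t"
  have "h x = \<one>\<^bsub>G\<^esub>"
    using s t hst hom_in_carrier[OF assms(2)]
    by (simp add: x_def hom_mult[OF assms(2)] hom_sinv[OF assms(1,2)])
  then have x: "x \<in> idems S" using kernel s t x_def by blast
  have "x \<otimes> s = x \<otimes> sinv x \<otimes> s"
    using x by (simp add: sinv_idem idems_def)
  also have "\<dots> = s \<otimes> (sinv t \<otimes> t \<otimes> (sinv s \<otimes> s))"
    using s t by (simp add: x_def sinv_mult m_assoc)
  also have "\<dots> = s \<otimes> (sinv s \<otimes> s \<otimes> (sinv t \<otimes> t))"
    using s t idems_commute[OF sinv_mult_idem sinv_mult_idem] by metis
  also have "\<dots> = x \<otimes> t"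
    using s t by (simp add: x_def m_assoc)
  finally show "p \<in> sigma_rel S" using p s t x by (auto simp: sigma_rel_def)
next
  interpret G: group G by fact
  fix p
  assume "p \<in> sigma_rel S"
  then obtain s t e where p: "p = (s, t)" and st: "s \<in> carrier S" "t \<in> carrier S"
    and e: "e \<in> idems S" and est: "e \<otimes> s = e \<otimes> t" by (auto simp: sigma_rel_def)
  have ec: "e \<in> carrier S" using e by (simp add: idems_def)
  have "h s = h e \<otimes>\<^bsub>G\<^esub> h s"
    using hom_idem_eq_one[OF assms(1,2) e] hom_in_carrier[OF assms(2) st(1)] by simp
  also have "\<dots> = h e \<otimes>\<^bsub>G\<^esub> h t"
    using est hom_mult[OF assms(2) ec] st by metis
  also have "\<dots> = h t"
    using hom_idem_eq_one[OF assms(1,2) e] hom_in_carrier[OF assms(2) st(2)] by simp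
  finally have "h s = h t" .
  then show "p \<in> ker_rel S h" using p st by (simp add: ker_rel_def)
qed

end

locale semilattice_of_groups_extension = inv_semigroup U
  for U :: "'u monoid" (structure) +
  fixes A :: "'a monoid" and G :: "'g monoid" and i :: "'a \<Rightarrow> 'u" and j :: "'u \<Rightarrow> 'g"
  assumes semilattice_of_groups_A: "semilattice_of_groups A"
    and group_extension: "group_extension A U G i j"
begin

lemma group_G: "group G"
  and i_mon: "i \<in> mon A U"
  and j_epi: "j \<in> epi U G"
  and i_image: "i ` carrier A = {u \<in> carrier U. j u = \<one>\<^bsub>G\<^esub>}"
  using group_extension unfolding group_extension_def by auto

sublocale G: group G by (fact group_G)

lemma j_hom: "j \<in> hom U G"
  using j_epi by (simp add: epi_def)

lemma j_closed [simp]: "u \<in> carrier U \<Longrightarrow> j u \<in> carrier G"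
  using hom_in_carrier[OF j_hom] .

lemma j_mult [simp]: "u \<in> carrier U \<Longrightarrow> v \<in> carrier U \<Longrightarrow> j (u \<otimes> v) = j u \<otimes>\<^bsub>G\<^esub> j v"
  using hom_mult[OF j_hom] .

lemma j_sinv [simp]: "u \<in> carrier U \<Longrightarrow> j (sinv u) = inv\<^bsub>G\<^esub> j u"
  using hom_sinv[OF group_G j_hom] .

lemma kernel_commutes_with_idems:
  assumes e: "e \<in> idems U" and a: "a \<in> carrier U" "j a = \<one>\<^bsub>G\<^esub>"
  shows "e \<otimes> a = a \<otimes> e"
proof -
  have i_mult: "\<And>x y. x \<in> carrier A \<Longrightarrow> y \<in> carrier A \<Longrightarrow> i (x \<otimes>\<^bsub>A\<^esub> y) = i x \<otimes> i y"
    and inj: "inj_on i (carrier A)"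
    using i_mon unfolding mon_def hom_def by auto
  have A_closed: "\<And>x y. x \<in> carrier A \<Longrightarrow> y \<in> carrier A \<Longrightarrow> x \<otimes>\<^bsub>A\<^esub> y \<in> carrier A"
    using semilattice_of_groups_A
    unfolding semilattice_of_groups_def inverse_semigroup_def semigroup_on_def by blast
  have ec: "e \<in> carrier U" "e \<otimes> e = e" using e by (auto simp: idems_def)
  obtain x where x: "x \<in> carrier A" "e = i x"
    using i_image hom_idem_eq_one[OF group_G j_hom e] ec by auto
  obtain y where y: "y \<in> carrier A" "a = i y" using i_image a by auto
  have "i (x \<otimes>\<^bsub>A\<^esub> x) = i x" using i_mult x ec by simp
  then have "x \<in> idems A" using inj x A_closed by (auto simp: idems_def dest: inj_onD)
  then have "x \<otimes>\<^bsub>A\<^esub> y = y \<otimes>\<^bsub>A\<^esub> x"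
    using semilattice_of_groups_A y unfolding semilattice_of_groups_def by blast
  then show ?thesis using i_mult x y by metis
qed

definition rho :: "'u \<Rightarrow> 'u \<Rightarrow> bool" where
  "rho u v \<longleftrightarrow> u \<in> carrier U \<and> v \<in> carrier U \<and> j u = j v \<and> u \<otimes> sinv u = v \<otimes> sinv v"

lemma rho_refl: "u \<in> carrier U \<Longrightarrow> rho u u"
  by (simp add: rho_def)

lemma rho_sym: "rho u v \<Longrightarrow> rho v u"
  by (auto simp: rho_def)

lemma rho_trans: "rho u v \<Longrightarrow> rho v w \<Longrightarrow> rho u w"
  by (auto simp: rho_def)

lemma rho_mult_left:
  assumes "rho u v" and w: "w \<in> carrier U"
  shows "rho (w \<otimes> u) (w \<otimes> v)"
proof -
  have u: "u \<in> carrier U" and v: "v \<in> carrier U" and juv: "j u = j v"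
    and R: "u \<otimes> sinv u = v \<otimes> sinv v"
    using assms(1) by (auto simp: rho_def)
  have "w \<otimes> u \<otimes> sinv (w \<otimes> u) = w \<otimes> (u \<otimes> sinv u) \<otimes> sinv w"
    using u w by (simp add: sinv_mult m_assoc)
  also have "\<dots> = w \<otimes> v \<otimes> sinv (w \<otimes> v)"
    using v w by (simp add: R sinv_mult m_assoc)
  finally show ?thesis using u v w juv by (simp add: rho_def)
qed

text \<open>Right compatibility is where the central idempotents of A enter: writing v = u a with
  a = u\<inverse>v in the kernel of j, the idempotent w w\<inverse> can be moved past a.\<close>
lemma rho_mult_right:
  assumes "rho u v" and w: "w \<in> carrier U"
  shows "rho (u \<otimes> w) (v \<otimes> w)"
proof -
  have u: "u \<in> carrier U" and v: "v \<in> carrier U" and juv: "j u = j v"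
    and R: "u \<otimes> sinv u = v \<otimes> sinv v"
    using assms(1) by (auto simp: rho_def)
  define a where "a = sinv u \<otimes> v"
  define g where "g = w \<otimes> sinv w"
  have ac: "a \<in> carrier U" and gc: "g \<in> carrier U" using u v w by (simp_all add: a_def g_def)
  have ga: "g \<otimes> a = a \<otimes> g"
    using kernel_commutes_with_idems[OF mult_sinv_idem[OF w] ac] u v juv
    by (simp add: a_def g_def)
  have "v = v \<otimes> sinv v \<otimes> v" using v by (simp add: sinv_regular)
  also have "\<dots> = u \<otimes> sinv u \<otimes> v" by (simp only: R)
  also have "\<dots> = u \<otimes> a" using u v by (simp add: a_def m_assoc)
  finally have v_eq: "v = u \<otimes> a" .
  have "a \<otimes> sinv a = sinv u \<otimes> (v \<otimes> sinv v) \<otimes> u"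
    using u v by (simp add: a_def sinv_mult m_assoc)
  also have "\<dots> = sinv u \<otimes> (u \<otimes> sinv u) \<otimes> u" by (simp only: R)
  also have "\<dots> = sinv u \<otimes> u" using u by (simp add: m_assoc)
  finally have aa: "a \<otimes> sinv a = sinv u \<otimes> u" .
  have "v \<otimes> w \<otimes> sinv (v \<otimes> w) = u \<otimes> (a \<otimes> g) \<otimes> sinv a \<otimes> sinv u"
    using u w ac by (simp add: v_eq g_def sinv_mult m_assoc)
  also have "\<dots> = u \<otimes> (g \<otimes> a) \<otimes> sinv a \<otimes> sinv u" by (simp only: ga)
  also have "\<dots> = u \<otimes> g \<otimes> (a \<otimes> sinv a) \<otimes> sinv u"
    using u ac gc by (simp add: m_assoc)
  also have "\<dots> = u \<otimes> w \<otimes> sinv (u \<otimes> w)"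
    using u w by (simp add: aa g_def sinv_mult m_assoc)
  finally show ?thesis using u v w juv by (simp add: rho_def)
qed

lemma rho_mult: "rho u u' \<Longrightarrow> rho v v' \<Longrightarrow> rho (u \<otimes> v) (u' \<otimes> v')"
  by (meson rho_def rho_mult_left rho_mult_right rho_trans)

definition rho_class :: "'u \<Rightarrow> 'u set" where
  "rho_class u = {v. rho u v}"

definition rep :: "'u set \<Rightarrow> 'u" where
  "rep X = (SOME x. x \<in> X)"

definition U_rho :: "'u set monoid" where
  "U_rho = \<lparr>carrier = rho_class ` carrier U, mult = (\<lambda>X Y. rho_class (rep X \<otimes> rep Y)), one = {}\<rparr>"

definition kappa :: "'u set \<Rightarrow> 'g" where
  "kappa X = j (rep X)"

lemma rho_class_eq_iff:
  assumes "u \<in> carrier U" "v \<in> carrier U"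
  shows "rho_class u = rho_class v \<longleftrightarrow> rho u v"
  using assms rho_refl rho_sym rho_trans unfolding rho_class_def by blast

lemma rho_rep: "u \<in> carrier U \<Longrightarrow> rho u (rep (rho_class u))"
  using someI[of "\<lambda>x. x \<in> rho_class u" u] rho_refl by (simp add: rep_def rho_class_def)

lemma carrier_U_rho: "carrier U_rho = rho_class ` carrier U"
  by (simp add: U_rho_def)

lemma rho_class_closed [intro, simp]: "u \<in> carrier U \<Longrightarrow> rho_class u \<in> carrier U_rho"
  by (simp add: carrier_U_rho)

lemma U_rho_mult [simp]:
  assumes "u \<in> carrier U" "v \<in> carrier U"
  shows "rho_class u \<otimes>\<^bsub>U_rho\<^esub> rho_class v = rho_class (u \<otimes> v)"
proof -
  have "rho (rep (rho_class u) \<otimes> rep (rho_class v)) (u \<otimes> v)"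
    using rho_mult[OF rho_rep rho_rep] assms rho_sym by blast
  then show ?thesis
    using assms by (simp add: U_rho_def rho_class_eq_iff rho_def)
qed

lemma kappa_rho_class [simp]: "u \<in> carrier U \<Longrightarrow> kappa (rho_class u) = j u"
  using rho_rep by (simp add: kappa_def rho_def)

lemma rho_class_idem_iff:
  assumes u: "u \<in> carrier U"
  shows "rho_class u \<in> idems U_rho \<longleftrightarrow> j u = \<one>\<^bsub>G\<^esub>"
proof
  assume "rho_class u \<in> idems U_rho"
  then have "j (u \<otimes> u) = j u"
    using u by (auto simp: idems_def rho_class_eq_iff rho_def)
  then show "j u = \<one>\<^bsub>G\<^esub>" using u by simp
next
  assume ju: "j u = \<one>\<^bsub>G\<^esub>"
  have c: "u \<otimes> (u \<otimes> sinv u) = u \<otimes> sinv u \<otimes> u"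
    using kernel_commutes_with_idems[OF mult_sinv_idem[OF u] u ju] by simp
  have "u \<otimes> u \<otimes> sinv (u \<otimes> u) = u \<otimes> (u \<otimes> sinv u) \<otimes> sinv u"
    using u by (simp add: sinv_mult m_assoc)
  also have "\<dots> = u \<otimes> sinv u \<otimes> u \<otimes> sinv u" by (simp only: c)
  finally have "rho (u \<otimes> u) u" using u ju by (simp add: rho_def sinv_regular)
  then show "rho_class u \<in> idems U_rho"
    using u by (simp add: idems_def rho_class_eq_iff)
qed

lemma rho_class_idem_eq:
  assumes u: "u \<in> carrier U" and idem: "rho_class u \<in> idems U_rho"
  shows "rho_class u = rho_class (u \<otimes> sinv u)"
proof -
  have "sinv (u \<otimes> sinv u) = u \<otimes> sinv u" by (rule sinv_idem[OF mult_sinv_idem[OF u]])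
  then have "rho u (u \<otimes> sinv u)"
    using u rho_class_idem_iff[OF u] idem mult_sinv_idem[OF u] by (simp add: rho_def idems_def)
  then show ?thesis using u by (simp add: rho_class_eq_iff)
qed

lemma U_rho_inverse_semigroup: "inverse_semigroup U_rho"
proof (rule inverse_semigroupI)
  show "semigroup_on U_rho"
    unfolding semigroup_on_def carrier_U_rho by (auto simp: m_assoc)
next
  fix X assume "X \<in> carrier U_rho"
  then obtain u where u: "u \<in> carrier U" "X = rho_class u" by (auto simp: carrier_U_rho)
  then show "\<exists>Y\<in>carrier U_rho. X \<otimes>\<^bsub>U_rho\<^esub> Y \<otimes>\<^bsub>U_rho\<^esub> X = X \<and> Y \<otimes>\<^bsub>U_rho\<^esub> X \<otimes>\<^bsub>U_rho\<^esub> Y = Y"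
    by (intro bexI[of _ "rho_class (sinv u)"]) (simp_all add: sinv_regular sinv_regular')
next
  fix X Y assume X: "X \<in> idems U_rho" and Y: "Y \<in> idems U_rho"
  obtain u where u: "u \<in> carrier U" "X = rho_class u" using X by (auto simp: carrier_U_rho idems_def)
  obtain v where v: "v \<in> carrier U" "Y = rho_class v" using Y by (auto simp: carrier_U_rho idems_def)
  have "X = rho_class (u \<otimes> sinv u)" "Y = rho_class (v \<otimes> sinv v)"
    using u v X Y rho_class_idem_eq by simp_all
  then show "X \<otimes>\<^bsub>U_rho\<^esub> Y = Y \<otimes>\<^bsub>U_rho\<^esub> X"
    using u v idems_commute[OF mult_sinv_idem mult_sinv_idem, of u v] by simp
qed

lemma kappa_epi: "kappa \<in> epi U_rho G"
proof -
  have "kappa ` carrier U_rho = j ` carrier U"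
    by (force simp: carrier_U_rho image_image)
  then show ?thesis
    using j_epi unfolding epi_def hom_def by (auto simp: carrier_U_rho)
qed

lemma is_extension_U_rho: "is_extension A U U_rho i rho_class"
  unfolding is_extension_def
proof (intro conjI)
  show "inverse_semigroup A"
    using semilattice_of_groups_A by (simp add: semilattice_of_groups_def)
  show "inverse_semigroup U" "inverse_semigroup U_rho" "i \<in> mon A U"
    by (simp_all add: inverse_semigroup U_rho_inverse_semigroup i_mon)
  show "rho_class \<in> epi U U_rho"
    unfolding epi_def hom_def by (auto simp: carrier_U_rho)
  show "idempotent_separating U rho_class"
    unfolding idempotent_separating_def
  proof (intro ballI impI)
    fix e f assume e: "e \<in> idems U" and f: "f \<in> idems U" and "rho_class e = rho_class f"
    then have "e \<otimes> sinv e = f \<otimes> sinv f"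
      by (simp add: idems_def rho_class_eq_iff rho_def)
    then show "e = f" using e f by (simp add: sinv_idem idems_def)
  qed
  show "i ` carrier A = {u \<in> carrier U. rho_class u \<in> idems U_rho}"
    using i_image rho_class_idem_iff by auto
qed

lemma E_unitary_ker_eq_sigma_if_factorization:
  fixes S :: "'s monoid" and \<pi> :: "'u \<Rightarrow> 's" and \<kappa> :: "'s \<Rightarrow> 'g"
  assumes \<kappa>: "\<kappa> \<in> epi S G" and extension: "is_extension A U S i \<pi>"
    and factorization: "\<forall>u\<in>carrier U. j u = \<kappa> (\<pi> u)"
  shows "E_unitary S \<and> ker_rel S \<kappa> = sigma_rel S"
proof -
  have S: "inverse_semigroup S" and \<pi>: "\<pi> \<in> epi U S"
    and i_image_S: "i ` carrier A = {u \<in> carrier U. \<pi> u \<in> idems S}"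
    using extension unfolding is_extension_def by auto
  interpret S: inv_semigroup S using S by (rule inv_semigroup.intro)
  have \<kappa>_hom: "\<kappa> \<in> hom S G" using \<kappa> by (simp add: epi_def)
  have "\<pi> u \<in> idems S \<longleftrightarrow> \<kappa> (\<pi> u) = \<one>\<^bsub>G\<^esub>" if "u \<in> carrier U" for u
    using i_image i_image_S factorization that by (metis (mono_tags, lifting) mem_Collect_eq)
  moreover have "carrier S = \<pi> ` carrier U" using \<pi> by (simp add: epi_def)
  ultimately have "{s \<in> carrier S. \<kappa> s = \<one>\<^bsub>G\<^esub>} = idems S"
    by (auto simp: idems_def)
  then show ?thesis
    using S.E_unitary_if_kernel_idems S.ker_rel_eq_sigma_rel_if_kernel_idems group_G \<kappa>_hom
    by blast
qed

end

theorem proposition4p5: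
  fixes A :: "'a monoid" and U :: "'u monoid" and G :: "'g monoid"
    and i :: "'a \<Rightarrow> 'u" and j :: "'u \<Rightarrow> 'g"
  assumes "semilattice_of_groups A"
    and "group_extension A U G i j"
  shows "(\<exists>(S :: 'u set monoid) \<pi> \<kappa>.
            \<kappa> \<in> epi S G \<and> is_extension A U S i \<pi> \<and>
            (\<forall>u\<in>carrier U. j u = \<kappa> (\<pi> u)))
       \<and> (\<forall>(S :: 's monoid) \<pi> \<kappa>.
            \<kappa> \<in> epi S G \<and> is_extension A U S i \<pi> \<and>
            (\<forall>u\<in>carrier U. j u = \<kappa> (\<pi> u))
            \<longrightarrow> E_unitary S \<and> ker_rel S \<kappa> = sigma_rel S)"
proof -
  interpret semilattice_of_groups_extension U A G i j
    using assms by unfold_locales (simp_all add: group_extension_def)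
  have "\<forall>u\<in>carrier U. j u = kappa (rho_class u)" by simp
  then show ?thesis
    using kappa_epi is_extension_U_rho E_unitary_ker_eq_sigma_if_factorization by blast
qed

end
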